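(* For any $c\in\mathbb{R}$ and any $\lambda\in\mathbb{Z}\setminus\{0,1\}$, the equation $$\mu(u_t)-u_{txx}+\lambda\mu(u)u_x=\lambda u_xu_{xx}+uu_{xxx}$$ admits the peaked period-one traveling-wave solution $u(t,x)=\varphi(x-ct)$, where $$\varphi(x)=\frac{c}{26}\big(12x^2+23\big)\quad\text{for }x\in[-\tfrac12,\tfrac12],$$ and $\varphi$ is extended periodically (with period $1$) to the real line.
   Context: Here $u(t,\cdot)$ is a $1$-periodic function on $\mathbb{R}$ (a function on $S^1=\mathbb{R}/\mathbb{Z}$) and $\mu(u)=\int_0^1u\,dx$. Since $\varphi$ is not smooth at $x\equiv\frac12\pmod 1$, the solution is understood in the weak sense, i.e. as a distributional solution of $u_t+uu_x+\Lambda_\mu^{-2}\partial_x\big(\lambda\mu(u)u+\frac{3-\lambda}{2}u_x^2\big)=0$, where $\Lambda_\mu^{-2}$ is the inverse of $\Lambda_\mu^2v=\mu(v)-v_{xx}$. *)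

theory Defs
  imports "HOL-Analysis.Analysis"
begin

definition mu :: "(real \<Rightarrow> real) \<Rightarrow> real" where
  "mu f = integral {0..1} f"

definition periodic1 :: "(real \<Rightarrow> real) \<Rightarrow> bool" where
  "periodic1 f \<longleftrightarrow> (\<forall>x. f (x + 1) = f x)"

definition smooth1 :: "(real \<Rightarrow> real) \<Rightarrow> bool" where
  "smooth1 f \<longleftrightarrow> (\<forall>n x. ((deriv ^^ n) f) differentiable (at x))"

text \<open>C^k functions of two real variables (t,x); partial derivatives taken
  from the Frechet derivative in directions (1,0) and (0,1).\<close>
fun Ck2 :: "nat \<Rightarrow> (real \<times> real \<Rightarrow> real) \<Rightarrow> bool" where
  "Ck2 0 f = continuous_on UNIV f"
| "Ck2 (Suc n) f = ((\<forall>p. f differentiable (at p))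
      \<and> Ck2 n (\<lambda>p. frechet_derivative f (at p) (1, 0))
      \<and> Ck2 n (\<lambda>p. frechet_derivative f (at p) (0, 1)))"

definition smooth2 :: "(real \<times> real \<Rightarrow> real) \<Rightarrow> bool" where
  "smooth2 f \<longleftrightarrow> (\<forall>n. Ck2 n f)"

definition test_fun2 :: "(real \<times> real \<Rightarrow> real) \<Rightarrow> bool" where
  "test_fun2 \<psi> \<longleftrightarrow> smooth2 \<psi> \<and> bounded {p. \<psi> p \<noteq> 0}"

text \<open>w is (a representative of) Lambda_mu^{-2} d/dx F, in the distributional sense on
  the circle: w is 1-periodic and, for every smooth 1-periodic psi,
  int_0^1 w (mu(psi) - psi'') dx = - int_0^1 F psi' dx,
  i.e. Lambda_mu^2 w = d/dx F as periodic distributions (Lambda_mu^2 is symmetric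
  and invertible on periodic distributions, so this determines w a.e.).\<close>
definition is_Lambda_inv_dx :: "(real \<Rightarrow> real) \<Rightarrow> (real \<Rightarrow> real) \<Rightarrow> bool" where
  "is_Lambda_inv_dx F w \<longleftrightarrow> periodic1 w \<and>
     (\<forall>\<psi>. smooth1 \<psi> \<and> periodic1 \<psi> \<longrightarrow>
        (\<lambda>x. w x * (mu \<psi> - deriv (deriv \<psi>) x)) integrable_on {0..1} \<and>
        (\<lambda>x. F x * deriv \<psi> x) integrable_on {0..1} \<and>
        integral {0..1} (\<lambda>x. w x * (mu \<psi> - deriv (deriv \<psi>) x))
          = - integral {0..1} (\<lambda>x. F x * deriv \<psi> x))"

text \<open>Weak (distributional) solution u(t,x) of
  u_t + u u_x + Lambda_mu^{-2} d/dx (lam mu(u) u + (3-lam)/2 u_x^2) = 0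
  on R x S^1.  ux is the weak x-derivative of u (u(t,.) absolutely continuous),
  w(t,.) = Lambda_mu^{-2} d/dx F(t,.), and the equation holds against all
  smooth compactly supported test functions on R x R.\<close>
definition weak_solution :: "real \<Rightarrow> (real \<Rightarrow> real \<Rightarrow> real) \<Rightarrow> bool" where
  "weak_solution lam u \<longleftrightarrow>
     continuous_on UNIV (\<lambda>p. u (fst p) (snd p)) \<and>
     (\<forall>t. periodic1 (u t)) \<and>
     (\<exists>ux w.
        (\<forall>t a b. a \<le> b \<longrightarrow> ((ux t) has_integral (u t b - u t a)) {a..b}) \<and>
        (\<forall>t. is_Lambda_inv_dx
               (\<lambda>x. lam * mu (u t) * u t x + (3 - lam) / 2 * (ux t x)\<^sup>2) (w t)) \<and>
        (\<forall>\<psi>. test_fun2 \<psi> \<longrightarrow>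
           ((\<lambda>p. u (fst p) (snd p) * frechet_derivative \<psi> (at p) (1, 0)
                 + (u (fst p) (snd p))\<^sup>2 / 2 * frechet_derivative \<psi> (at p) (0, 1)
                 - w (fst p) (snd p) * \<psi> p) has_integral 0) UNIV))"

text \<open>Periodic extension (period 1) of x \<mapsto> c/26 (12 x^2 + 23) from [-1/2,1/2];
  x - round-half-up(x) lies in [-1/2,1/2).\<close>
definition phi :: "real \<Rightarrow> real \<Rightarrow> real" where
  "phi c x = c / 26 * (12 * (x - of_int \<lfloor>x + 1/2\<rfloor>)\<^sup>2 + 23)"

end

theory Submission
  imports Defs
begin

text \<open>In the moving frame \<open>z = x - c t\<close> write \<open>u = \<phi>(z)\<close> and \<open>w = (c - \<phi>) \<phi>'\<close>, both extended
  1-periodically. Then \<open>u\<^sub>t + u u\<^sub>x = -w\<close>, and since \<open>\<phi>(\<plusminus>1/2) = c\<close>, \<open>w\<close> is continuous and is the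
  \<open>z\<close>-derivative of the continuous periodic flux \<open>c \<phi> - \<phi>\<^sup>2/2\<close>. Hence the weak equation splits into a
  transport term, which vanishes after integrating along the characteristics \<open>x = y + c t\<close>, and
  an exact \<open>x\<close>-derivative.
  For the nonlocal term note that \<open>\<phi>'' = 12c/13 = \<mu>(\<phi>)\<close>, so \<open>\<mu>(\<phi>) \<phi> - \<phi>'\<^sup>2/2\<close> is constant and
  \<open>F = \<lambda> \<mu>(u) u + (3-\<lambda>)/2 u\<^sub>x\<^sup>2\<close> equals \<open>K - w'\<close> for a constant \<open>K\<close>. As \<open>\<mu>(w) = 0\<close>,
  \<open>\<Lambda>\<^sub>\<mu>\<^sup>2 w = -w'' = \<partial>\<^sub>x F\<close> follows by integration by parts against periodic test functions.\<close>

section \<open>Periodic extension of a function on \<open>[-1/2, 1/2]\<close>\<close>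

definition centered_frac :: "real \<Rightarrow> real" where
  "centered_frac x = x - of_int \<lfloor>x + 1/2\<rfloor>"

definition per_ext :: "(real \<Rightarrow> real) \<Rightarrow> real \<Rightarrow> real" where
  "per_ext g x = g (centered_frac x)"

lemma centered_frac_bounds: "-1/2 \<le> centered_frac x" "centered_frac x < 1/2"
  unfolding centered_frac_def by linarith+

lemma per_ext_add_one: "per_ext g (x + 1) = per_ext g x"
proof -
  have "\<lfloor>x + 1 + 1/2\<rfloor> = \<lfloor>x + 1/2\<rfloor> + 1"
    using floor_add_int[of "x + 1/2" 1] by (simp add: algebra_simps)
  then show ?thesis by (simp add: per_ext_def centered_frac_def)
qed

lemma periodic1_per_ext_shift: "periodic1 (\<lambda>x. per_ext g (x - s))"
  unfolding periodic1_def using per_ext_add_one[of g "_ - s"] by (simp add: algebra_simps)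

lemma per_ext_eventually_at_right:
  "\<forall>\<^sub>F y in at_right x. per_ext g y = g (y - of_int \<lfloor>x + 1/2\<rfloor>)"
  unfolding eventually_at_right_field
proof (intro exI conjI allI impI)
  show "x < of_int \<lfloor>x + 1/2\<rfloor> + 1/2" by linarith
  fix y assume "x < y" "y < of_int \<lfloor>x + 1/2\<rfloor> + 1/2"
  then have "\<lfloor>y + 1/2\<rfloor> = \<lfloor>x + 1/2\<rfloor>" by (intro floor_unique) linarith+
  then show "per_ext g y = g (y - of_int \<lfloor>x + 1/2\<rfloor>)" by (simp add: per_ext_def centered_frac_def)
qed

text \<open>Seen from the left, \<open>x\<close> belongs to the cell of \<open>\<lceil>x - 1/2\<rceil>\<close>, in which \<open>x\<close> is represented by a point of
  \<open>(-1/2, 1/2]\<close>; this differs from \<open>centered_frac x\<close> only at the cell boundaries.\<close>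

lemma per_ext_eventually_at_left:
  "\<forall>\<^sub>F y in at_left x. per_ext g y = g (y - of_int \<lceil>x - 1/2\<rceil>)"
  unfolding eventually_at_left_field
proof (intro exI conjI allI impI)
  show "of_int \<lceil>x - 1/2\<rceil> - 1/2 < x" by linarith
  fix y assume "of_int \<lceil>x - 1/2\<rceil> - 1/2 < y" "y < x"
  then have "\<lfloor>y + 1/2\<rfloor> = \<lceil>x - 1/2\<rceil>" by (intro floor_unique) linarith+
  then show "per_ext g y = g (y - of_int \<lceil>x - 1/2\<rceil>)" by (simp add: per_ext_def centered_frac_def)
qed

lemma per_ext_left_value:
  assumes "centered_frac x = -1/2 \<Longrightarrow> g (-1/2) = g (1/2)"
  shows "g (x - of_int \<lceil>x - 1/2\<rceil>) = per_ext g x"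
proof (cases "centered_frac x = -1/2")
  case True
  then have "x - 1/2 = of_int (\<lfloor>x + 1/2\<rfloor> - 1)" by (simp add: centered_frac_def)
  then have "x - of_int \<lceil>x - 1/2\<rceil> = 1/2" by (metis ceiling_of_int diff_eq_eq add.commute)
  then show ?thesis using assms True by (simp only: per_ext_def)
next
  case False
  then have "\<lceil>x - 1/2\<rceil> = \<lfloor>x + 1/2\<rfloor>"
    using centered_frac_bounds[of x] unfolding centered_frac_def by (intro ceiling_unique) linarith+
  then show ?thesis by (simp add: per_ext_def centered_frac_def)
qed

lemma isCont_glue:
  fixes f :: "real \<Rightarrow> real"
  assumes "\<forall>\<^sub>F y in at_left x. f y = gl y" "\<forall>\<^sub>F y in at_right x. f y = gr y"
    and "isCont gl x" "isCont gr x" "gl x = f x" "gr x = f x"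
  shows "isCont f x"
proof -
  have "(gl \<longlongrightarrow> f x) (at_left x)" "(gr \<longlongrightarrow> f x) (at_right x)"
    using assms(3-6) by (auto simp: isCont_def filterlim_at_split)
  then have "(f \<longlongrightarrow> f x) (at_left x)" "(f \<longlongrightarrow> f x) (at_right x)"
    using tendsto_cong[OF assms(1)] tendsto_cong[OF assms(2)] by auto
  then show ?thesis by (simp add: isCont_def filterlim_split_at)
qed

lemma has_real_derivative_glue:
  fixes f :: "real \<Rightarrow> real"
  assumes "\<forall>\<^sub>F y in at_left x. f y = gl y" "\<forall>\<^sub>F y in at_right x. f y = gr y"
    and "(gl has_real_derivative D) (at x)" "(gr has_real_derivative D) (at x)"
    and "gl x = f x" "gr x = f x"
  shows "(f has_real_derivative D) (at x)"
proof -
  have "(f has_real_derivative D) (at_left x)"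
    using has_field_derivative_cong_eventually[OF assms(1)] assms(5)
      has_field_derivative_at_within[OF assms(3)] by simp
  moreover have "(f has_real_derivative D) (at_right x)"
    using has_field_derivative_cong_eventually[OF assms(2)] assms(6)
      has_field_derivative_at_within[OF assms(4)] by simp
  ultimately show ?thesis by (simp add: has_field_derivative_iff filterlim_split_at)
qed

lemma isCont_per_ext:
  assumes "continuous_on UNIV g" "g (-1/2) = g (1/2)"
  shows "isCont (per_ext g) x"
proof (rule isCont_glue[OF per_ext_eventually_at_left per_ext_eventually_at_right])
  have "isCont g y" for y using assms(1) by (simp add: continuous_on_eq_continuous_at)
  then have "isCont (\<lambda>y. g (y - r)) x" for r
    using isCont_o2[where f = "\<lambda>y. y - r" and a = x and g = g] by simp
  then show "isCont (\<lambda>y. g (y - of_int \<lceil>x - 1/2\<rceil>)) x" "isCont (\<lambda>y. g (y - of_int \<lfloor>x + 1/2\<rfloor>)) x"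
    by blast+
  show "g (x - of_int \<lceil>x - 1/2\<rceil>) = per_ext g x" by (rule per_ext_left_value) (use assms(2) in simp)
  show "g (x - of_int \<lfloor>x + 1/2\<rfloor>) = per_ext g x" by (simp add: per_ext_def centered_frac_def)
qed

lemma continuous_on_per_ext:
  "continuous_on UNIV g \<Longrightarrow> g (-1/2) = g (1/2) \<Longrightarrow> continuous_on UNIV (per_ext g)"
  by (simp add: continuous_at_imp_continuous_on isCont_per_ext)

lemma per_ext_has_real_derivative:
  assumes g: "\<And>z. (g has_real_derivative g' z) (at z)"
    and ends: "centered_frac x = -1/2 \<Longrightarrow> g (-1/2) = g (1/2) \<and> g' (-1/2) = g' (1/2)"
  shows "(per_ext g has_real_derivative per_ext g' x) (at x)"
proof (rule has_real_derivative_glue[OF per_ext_eventually_at_left per_ext_eventually_at_right])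
  have shift: "((\<lambda>y. g (y - r)) has_real_derivative g' (x - r)) (at x)" for r
    using DERIV_shift[of g "g' (x - r)" x "- r"] g by simp
  have "g' (x - of_int \<lceil>x - 1/2\<rceil>) = per_ext g' x"
    by (rule per_ext_left_value) (use ends in simp)
  then show "((\<lambda>y. g (y - of_int \<lceil>x - 1/2\<rceil>)) has_real_derivative per_ext g' x) (at x)"
    using shift by metis
  have "g' (x - of_int \<lfloor>x + 1/2\<rfloor>) = per_ext g' x" by (simp add: per_ext_def centered_frac_def)
  then show "((\<lambda>y. g (y - of_int \<lfloor>x + 1/2\<rfloor>)) has_real_derivative per_ext g' x) (at x)"
    using shift by metis
  show "g (x - of_int \<lceil>x - 1/2\<rceil>) = per_ext g x" by (rule per_ext_left_value) (use ends in simp)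
  show "g (x - of_int \<lfloor>x + 1/2\<rfloor>) = per_ext g x" by (simp add: per_ext_def centered_frac_def)
qed

lemma finite_centered_frac_eq_neg_half: "finite {x \<in> {a..b}. centered_frac x = -1/2}"
proof (rule finite_subset)
  show "{x \<in> {a..b}. centered_frac x = -1/2} \<subseteq> (\<lambda>k. of_int k - 1/2) ` {\<lfloor>a\<rfloor> .. \<lceil>b\<rceil> + 1}"
  proof
    fix x assume "x \<in> {x \<in> {a..b}. centered_frac x = -1/2}"
    then have x: "a \<le> x" "x \<le> b" "x = of_int \<lfloor>x + 1/2\<rfloor> - 1/2"
      by (auto simp: centered_frac_def)
    then have "\<lfloor>x + 1/2\<rfloor> \<in> {\<lfloor>a\<rfloor> .. \<lceil>b\<rceil> + 1}"
      by (simp add: floor_le_iff le_ceiling_iff) linarith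
    with x show "x \<in> (\<lambda>k. of_int k - 1/2) ` {\<lfloor>a\<rfloor> .. \<lceil>b\<rceil> + 1}" by (intro image_eqI)
  qed
qed simp

text \<open>Only \<open>g\<close> has to match at the cell boundaries: the finitely many kinks where \<open>g'\<close> jumps do not
  affect the integral.\<close>

lemma per_ext_has_integral:
  assumes g: "\<And>z. (g has_real_derivative g' z) (at z)" and "g (-1/2) = g (1/2)" and "a \<le> b"
  shows "(per_ext g' has_integral (per_ext g b - per_ext g a)) {a..b}"
proof (rule fundamental_theorem_of_calculus_interior_strong[OF finite_centered_frac_eq_neg_half \<open>a \<le> b\<close>])
  have "continuous_on UNIV g" using g by (meson DERIV_isCont continuous_at_imp_continuous_on)
  then show "continuous_on {a..b} (per_ext g)"
    using continuous_on_per_ext assms(2) continuous_on_subset by blast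
  fix x assume "x \<in> {a<..<b} - {x \<in> {a..b}. centered_frac x = -1/2}"
  then have "(per_ext g has_real_derivative per_ext g' x) (at x)"
    by (intro per_ext_has_real_derivative[OF g]) auto
  then show "(per_ext g has_vector_derivative per_ext g' x) (at x)"
    by (simp add: has_real_derivative_iff_has_vector_derivative)
qed

lemma per_ext_shift_has_integral:
  assumes "\<And>z. (g has_real_derivative g' z) (at z)" and "g (-1/2) = g (1/2)" and "a \<le> b"
  shows "((\<lambda>x. per_ext g' (x - s)) has_integral (per_ext g (b - s) - per_ext g (a - s))) {a..b}"
proof -
  have "(per_ext g' has_integral (per_ext g (b - s) - per_ext g (a - s))) {a + - s..b + - s}"
    using per_ext_has_integral[OF assms(1,2)] assms(3) by simp
  then show ?thesis
    using has_integral_shift_Icc_real[of "per_ext g'" "- s"] by (simp add: o_def)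
qed

lemma per_ext_shift_deriv_mean_zero:
  assumes "\<And>z. (g has_real_derivative g' z) (at z)" and "g (-1/2) = g (1/2)"
  shows "((\<lambda>x. per_ext g' (x - s)) has_integral 0) {0..1}"
  using per_ext_shift_has_integral[OF assms, of 0 1 s] per_ext_add_one[of g "- s"] by simp

section \<open>Inverting \<open>\<Lambda>\<^sub>\<mu>\<^sup>2\<close> on derivatives\<close>

lemma smooth1_has_real_derivative:
  "smooth1 \<psi> \<Longrightarrow> ((deriv ^^ n) \<psi> has_real_derivative (deriv ^^ Suc n) \<psi> x) (at x)"
  by (simp add: smooth1_def DERIV_deriv_iff_real_differentiable)

lemma periodic1_deriv: "periodic1 \<psi> \<Longrightarrow> periodic1 (deriv \<psi>)"
  unfolding periodic1_def
proof
  fix x assume per: "\<forall>x. \<psi> (x + 1) = \<psi> x"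
  have "\<psi> \<circ> (\<lambda>y. x + 1 + y) = \<psi> \<circ> (\<lambda>y. x + y)"
  proof
    fix y show "(\<psi> \<circ> (\<lambda>y. x + 1 + y)) y = (\<psi> \<circ> (\<lambda>y. x + y)) y"
      using per[rule_format, of "x + y"] by (simp add: ac_simps)
  qed
  then show "deriv \<psi> (x + 1) = deriv \<psi> x" by (metis deriv_shift_0)
qed

lemma is_Lambda_inv_dx_const_minus_deriv:
  assumes per: "periodic1 V" and dV: "\<And>x. (V has_real_derivative V' x) (at x)"
    and cV': "continuous_on UNIV V'" and mean: "(V has_integral 0) {0..1}"
  shows "is_Lambda_inv_dx (\<lambda>x. K - V' x) V"
  unfolding is_Lambda_inv_dx_def
proof (intro conjI allI impI per)
  fix \<psi> assume "smooth1 \<psi> \<and> periodic1 \<psi>"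
  then have sm: "smooth1 \<psi>" and per\<psi>: "periodic1 \<psi>" by auto
  note d0 = smooth1_has_real_derivative[OF sm, of 0, simplified]
  note d1 = smooth1_has_real_derivative[OF sm, of 1, simplified]
  have "continuous_on UNIV (deriv \<psi>)"
    using d1 by (meson DERIV_isCont continuous_at_imp_continuous_on)
  then have "(\<lambda>x. V' x * deriv \<psi> x) integrable_on {0..1}"
    using cV' by (intro integrable_continuous_interval continuous_on_mult) (auto intro: continuous_on_subset)
  then obtain J where J: "((\<lambda>x. V' x * deriv \<psi> x) has_integral J) {0..1}" by blast
  have "((\<lambda>x. V x * deriv \<psi> x) has_real_derivative V' x * deriv \<psi> x + V x * deriv (deriv \<psi>) x)
      (at x)" for x
    using DERIV_mult[OF dV d1] by (simp add: mult.commute)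
  then have "((\<lambda>x. V' x * deriv \<psi> x + V x * deriv (deriv \<psi>) x) has_integral
      V 1 * deriv \<psi> 1 - V 0 * deriv \<psi> 0) {0..1}"
    by (intro fundamental_theorem_of_calculus)
      (auto simp: has_real_derivative_iff_has_vector_derivative[symmetric]
        intro: has_field_derivative_at_within)
  also have "V 1 * deriv \<psi> 1 - V 0 * deriv \<psi> 0 = 0"
    using per[unfolded periodic1_def, THEN spec[of _ 0]]
      periodic1_deriv[OF per\<psi>, unfolded periodic1_def, THEN spec[of _ 0]] by simp
  finally have parts: "((\<lambda>x. V' x * deriv \<psi> x + V x * deriv (deriv \<psi>) x) has_integral 0) {0..1}" .
  have "(deriv \<psi> has_integral \<psi> 1 - \<psi> 0) {0..1}"
    by (intro fundamental_theorem_of_calculus)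
      (auto simp: has_real_derivative_iff_has_vector_derivative[symmetric]
        intro: has_field_derivative_at_within d0)
  then have "(deriv \<psi> has_integral 0) {0..1}"
    using per\<psi>[unfolded periodic1_def, THEN spec[of _ 0]] by simp
  then have "((\<lambda>x. K * deriv \<psi> x - V' x * deriv \<psi> x) has_integral K * 0 - J) {0..1}"
    by (intro has_integral_diff has_integral_mult_right J)
  then have rhs: "((\<lambda>x. (K - V' x) * deriv \<psi> x) has_integral - J) {0..1}"
    by (simp add: algebra_simps)
  have "((\<lambda>x. mu \<psi> * V x - (V' x * deriv \<psi> x + V x * deriv (deriv \<psi>) x) + V' x * deriv \<psi> x)
      has_integral mu \<psi> * 0 - 0 + J) {0..1}"
    by (intro has_integral_add has_integral_diff has_integral_mult_right mean parts J)
  then have lhs: "((\<lambda>x. V x * (mu \<psi> - deriv (deriv \<psi>) x)) has_integral J) {0..1}"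
    by (simp add: algebra_simps)
  from lhs rhs show "(\<lambda>x. V x * (mu \<psi> - deriv (deriv \<psi>) x)) integrable_on {0..1}"
    "(\<lambda>x. (K - V' x) * deriv \<psi> x) integrable_on {0..1}"
    "integral {0..1} (\<lambda>x. V x * (mu \<psi> - deriv (deriv \<psi>) x))
      = - integral {0..1} (\<lambda>x. (K - V' x) * deriv \<psi> x)"
    by (auto simp: integral_unique)
qed

section \<open>The peaked profile\<close>

definition profile :: "real \<Rightarrow> real \<Rightarrow> real" where
  "profile c z = c / 26 * (12 * z\<^sup>2 + 23)"

definition profile_slope :: "real \<Rightarrow> real \<Rightarrow> real" where
  "profile_slope c z = 12 * c / 13 * z"

definition flux :: "real \<Rightarrow> real \<Rightarrow> real" where
  "flux c z = c * profile c z - (profile c z)\<^sup>2 / 2"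

definition nonlocal :: "real \<Rightarrow> real \<Rightarrow> real" where
  "nonlocal c z = (c - profile c z) * profile_slope c z"

definition nonlocal_slope :: "real \<Rightarrow> real \<Rightarrow> real" where
  "nonlocal_slope c z = (c - profile c z) * (12 * c / 13) - (profile_slope c z)\<^sup>2"

lemma phi_eq_per_ext: "phi c = per_ext (profile c)"
  by (simp add: fun_eq_iff phi_def per_ext_def centered_frac_def profile_def)

lemma profile_at_half: "profile c (-1/2) = c" "profile c (1/2) = c"
  by (simp_all add: profile_def power2_eq_square)

lemma profile_ends: "profile c (-1/2) = profile c (1/2)"
  unfolding profile_at_half ..

lemma profile_has_real_derivative: "(profile c has_real_derivative profile_slope c z) (at z)"
  unfolding profile_def profile_slope_def by (auto intro!: derivative_eq_intros simp: field_simps)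

lemma flux_has_real_derivative: "(flux c has_real_derivative nonlocal c z) (at z)"
  unfolding flux_def nonlocal_def
  by (auto intro!: derivative_eq_intros profile_has_real_derivative simp: algebra_simps)

lemma nonlocal_has_real_derivative: "(nonlocal c has_real_derivative nonlocal_slope c z) (at z)"
  unfolding nonlocal_def nonlocal_slope_def profile_slope_def profile_def
  by (auto intro!: derivative_eq_intros simp: power2_eq_square field_simps)

lemma continuous_on_nonlocal_slope: "continuous_on UNIV (nonlocal_slope c)"
  unfolding nonlocal_slope_def profile_def profile_slope_def by (intro continuous_intros)

lemma nonlocal_ends: "nonlocal c (-1/2) = nonlocal c (1/2)"
  unfolding nonlocal_def profile_at_half by simp

lemma flux_ends: "flux c (-1/2) = flux c (1/2)"
  unfolding flux_def profile_at_half by simp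

lemma nonlocal_slope_ends: "nonlocal_slope c (-1/2) = nonlocal_slope c (1/2)"
  by (simp add: nonlocal_slope_def profile_def profile_slope_def)

lemma mu_phi_shift: "mu (\<lambda>x. phi c (x - s)) = 12 * c / 13"
proof -
  have "((\<lambda>z. c / 26 * (4 * z ^ 3 - z)) has_real_derivative profile c z - 12 * c / 13) (at z)" for z
    by (auto intro!: derivative_eq_intros simp: profile_def power2_eq_square algebra_simps)
  moreover have "c / 26 * (4 * (-1/2) ^ 3 - (-1/2)) = c / 26 * (4 * (1/2) ^ 3 - 1/2)"
    by (simp add: power3_eq_cube)
  ultimately have "((\<lambda>x. per_ext (\<lambda>z. profile c z - 12 * c / 13) (x - s)) has_integral 0) {0..1}"
    by (rule per_ext_shift_deriv_mean_zero)
  then have "((\<lambda>x. per_ext (profile c) (x - s) - 12 * c / 13) has_integral 0) {0..1}"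
    by (simp add: per_ext_def)
  from has_integral_add[OF this has_integral_const_real[of "12 * c / 13" 0 1]]
  show ?thesis by (simp add: mu_def phi_eq_per_ext integral_unique)
qed

lemma nonlocal_mean_zero: "((\<lambda>x. per_ext (nonlocal c) (x - s)) has_integral 0) {0..1}"
  by (rule per_ext_shift_deriv_mean_zero[OF flux_has_real_derivative flux_ends])

text \<open>The \<open>z\<^sup>2\<close>-terms cancel because the second derivative \<open>12c/13\<close> of the profile equals its mean.\<close>

lemma profile_quadratic_identity:
  "lam * (12 * c / 13) * profile c z + (3 - lam) / 2 * (profile_slope c z)\<^sup>2
    = (18 + 138 * lam) * c\<^sup>2 / 169 - nonlocal_slope c z"
  by (simp add: profile_def profile_slope_def nonlocal_slope_def field_simps power2_eq_square)

lemma nonlocal_is_Lambda_inv_dx: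
  "is_Lambda_inv_dx
     (\<lambda>x. lam * mu (\<lambda>x. phi c (x - s)) * phi c (x - s)
       + (3 - lam) / 2 * (per_ext (profile_slope c) (x - s))\<^sup>2)
     (\<lambda>x. per_ext (nonlocal c) (x - s))"
proof -
  have dV: "((\<lambda>x. per_ext (nonlocal c) (x - s)) has_real_derivative
      per_ext (nonlocal_slope c) (x - s)) (at x)" for x
  proof -
    have "(per_ext (nonlocal c) has_real_derivative per_ext (nonlocal_slope c) (x - s)) (at (x - s))"
      using per_ext_has_real_derivative[OF nonlocal_has_real_derivative]
        nonlocal_ends nonlocal_slope_ends by blast
    then show ?thesis using DERIV_shift[of "per_ext (nonlocal c)" _ x "- s"] by simp
  qed
  have cV': "continuous_on UNIV (\<lambda>x. per_ext (nonlocal_slope c) (x - s))"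
    using continuous_on_per_ext[OF continuous_on_nonlocal_slope nonlocal_slope_ends]
    by (rule continuous_on_compose2) (auto intro!: continuous_intros)
  have "lam * mu (\<lambda>x. phi c (x - s)) * phi c (x - s)
      + (3 - lam) / 2 * (per_ext (profile_slope c) (x - s))\<^sup>2
      = (18 + 138 * lam) * c\<^sup>2 / 169 - per_ext (nonlocal_slope c) (x - s)" for x
    unfolding mu_phi_shift unfolding phi_eq_per_ext per_ext_def by (rule profile_quadratic_identity)
  then show ?thesis
    using is_Lambda_inv_dx_const_minus_deriv[OF periodic1_per_ext_shift dV cV' nonlocal_mean_zero] by simp
qed

section \<open>Test functions on the plane\<close>

definition partial_t :: "(real \<times> real \<Rightarrow> real) \<Rightarrow> real \<times> real \<Rightarrow> real" where
  "partial_t \<psi> p = frechet_derivative \<psi> (at p) (1, 0)"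

definition partial_x :: "(real \<times> real \<Rightarrow> real) \<Rightarrow> real \<times> real \<Rightarrow> real" where
  "partial_x \<psi> p = frechet_derivative \<psi> (at p) (0, 1)"

lemma test_fun2_regular:
  assumes "test_fun2 \<psi>"
  shows "\<psi> differentiable (at p)" "continuous_on UNIV \<psi>"
    "continuous_on UNIV (partial_t \<psi>)" "continuous_on UNIV (partial_x \<psi>)"
proof -
  have "Ck2 1 \<psi>" using assms by (simp add: test_fun2_def smooth2_def)
  then show "\<psi> differentiable (at p)" "continuous_on UNIV (partial_t \<psi>)" "continuous_on UNIV (partial_x \<psi>)"
    by (cases p, auto simp: partial_t_def partial_x_def)
  have "Ck2 0 \<psi>" using assms by (simp add: test_fun2_def smooth2_def)
  then show "continuous_on UNIV \<psi>" by simp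
qed

lemma test_fun2_support:
  assumes "test_fun2 \<psi>"
  obtains T where "T > 0"
    "\<And>t x. T \<le> \<bar>t\<bar> \<or> T \<le> \<bar>x\<bar> \<Longrightarrow> \<psi> (t, x) = 0 \<and> partial_t \<psi> (t, x) = 0 \<and> partial_x \<psi> (t, x) = 0"
proof -
  obtain R where R: "R > 0" "\<And>p. \<psi> p \<noteq> 0 \<Longrightarrow> norm p \<le> R"
    using assms unfolding test_fun2_def bounded_pos by force
  have vanish: "\<psi> p = 0 \<and> frechet_derivative \<psi> (at p) = (\<lambda>_. 0)" if "R < norm p" for p
  proof -
    have zero: "\<psi> q = 0" if "R < norm q" for q using R(2)[of q] that by fastforce
    have "(\<psi> has_derivative frechet_derivative \<psi> (at p)) (at p)"
      using test_fun2_regular(1)[OF assms] frechet_derivative_works by blast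
    moreover have "open {q :: real \<times> real. R < norm q}"
      by (intro open_Collect_less continuous_intros)
    ultimately have "((\<lambda>_. 0) has_derivative frechet_derivative \<psi> (at p)) (at p)"
      by (rule has_derivative_transform_within_open) (use that zero in auto)
    then have "frechet_derivative \<psi> (at p) = (\<lambda>_. 0)"
      using has_derivative_unique has_derivative_const by blast
    then show ?thesis using zero that by simp
  qed
  show ?thesis
  proof (rule that[of "R + 1"])
    fix t x :: real assume "R + 1 \<le> \<bar>t\<bar> \<or> R + 1 \<le> \<bar>x\<bar>"
    then have "R < norm (t, x)" using norm_fst_le[of t x] norm_snd_le[of x t] by auto
    then show "\<psi> (t, x) = 0 \<and> partial_t \<psi> (t, x) = 0 \<and> partial_x \<psi> (t, x) = 0"
      using vanish by (simp add: partial_t_def partial_x_def)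
  qed (use R in simp)
qed

lemma has_real_derivative_along_line:
  assumes "\<psi> differentiable (at (a + u * s, b + v * s))"
  shows "((\<lambda>s. \<psi> (a + u * s, b + v * s)) has_real_derivative
    u * partial_t \<psi> (a + u * s, b + v * s) + v * partial_x \<psi> (a + u * s, b + v * s)) (at s)"
proof -
  let ?p = "(a + u * s, b + v * s)" and ?L = "frechet_derivative \<psi> (at (a + u * s, b + v * s))"
  have "((\<lambda>s. (a + u * s, b + v * s)) has_derivative (\<lambda>h. (u * h, v * h))) (at s)"
    by (auto intro!: derivative_eq_intros)
  from diff_chain_at[OF this frechet_derivative_works[THEN iffD1, OF assms]]
  have "((\<lambda>s. \<psi> (a + u * s, b + v * s)) has_derivative (\<lambda>h. ?L (u * h, v * h))) (at s)"
    by (simp add: o_def)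
  moreover have "(\<lambda>h. ?L (u * h, v * h)) = (*) (u * partial_t \<psi> ?p + v * partial_x \<psi> ?p)"
  proof
    fix h
    have "linear ?L"
      using assms frechet_derivative_works has_derivative_linear by blast
    then show "?L (u * h, v * h) = (u * partial_t \<psi> ?p + v * partial_x \<psi> ?p) * h"
      using linear_add[of ?L "(u * h, 0)" "(0, v * h)"] linear_scale[of ?L "u * h" "(1, 0)"]
        linear_scale[of ?L "v * h" "(0, 1)"]
      by (simp add: partial_t_def partial_x_def algebra_simps)
  qed
  ultimately show ?thesis unfolding has_field_derivative_def by simp
qed

lemma has_integral_compact_support_iterated:
  fixes F :: "real \<times> real \<Rightarrow> real"
  assumes cont: "continuous_on UNIV F" and supp: "\<And>t x. T \<le> \<bar>t\<bar> \<or> T \<le> \<bar>x\<bar> \<Longrightarrow> F (t, x) = 0"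
  shows "(F has_integral integral {-T..T} (\<lambda>t. integral {-T..T} (\<lambda>x. F (t, x)))) UNIV"
proof -
  have box: "continuous_on (cbox (-T, -T) (T, T)) F" using cont continuous_on_subset by blast
  have "(F has_integral integral (cbox (-T, -T) (T, T)) F) (cbox (-T, -T) (T, T))"
    using integrable_continuous[OF box] by (rule integrable_integral)
  moreover have "cbox (-T, -T) (T, T) = {-T..T} \<times> {-T..T}"
    unfolding cbox_Pair_eq by (simp add: cbox_interval)
  ultimately have "(F has_integral integral {-T..T} (\<lambda>t. integral {-T..T} (\<lambda>x. F (t, x))))
      ({-T..T} \<times> {-T..T})"
    unfolding integral_prod_continuous[OF box] by (simp only: cbox_interval)
  then show ?thesis
    by (rule has_integral_on_superset) (auto simp: abs_le_iff intro!: supp)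
qed

lemma integral_Icc_compact_support:
  fixes f :: "real \<Rightarrow> real"
  assumes "continuous_on UNIV f" "\<And>x. T \<le> \<bar>x\<bar> \<Longrightarrow> f x = 0" "a \<le> -T" "T \<le> b"
  shows "integral {a..b} f = integral {-T..T} f"
proof -
  have "(f has_integral integral {-T..T} f) {-T..T}"
    by (intro integrable_integral integrable_continuous_interval continuous_on_subset[OF assms(1)]) auto
  then have "(f has_integral integral {-T..T} f) {a..b}"
    by (rule has_integral_on_superset) (use assms in auto)
  then show ?thesis by (rule integral_unique)
qed

section \<open>The weak formulation\<close>

lemma transport_has_integral_zero:
  fixes f :: "real \<Rightarrow> real"
  assumes f: "continuous_on UNIV f" and \<psi>: "test_fun2 \<psi>"
  shows "((\<lambda>p. f (snd p - c * fst p) * (partial_t \<psi> p + c * partial_x \<psi> p)) has_integral 0) UNIV"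
proof -
  obtain T where T: "T > 0" and supp: "\<And>t x. T \<le> \<bar>t\<bar> \<or> T \<le> \<bar>x\<bar> \<Longrightarrow>
      \<psi> (t, x) = 0 \<and> partial_t \<psi> (t, x) = 0 \<and> partial_x \<psi> (t, x) = 0"
    using test_fun2_support[OF \<psi>] by blast
  define A where "A = (\<lambda>p. f (snd p - c * fst p) * (partial_t \<psi> p + c * partial_x \<psi> p))"
  define G where "G = (\<lambda>t y. A (t, y + c * t))"
  define T' where "T' = T + \<bar>c\<bar> * T"
  have cA: "continuous_on UNIV A"
    unfolding A_def using test_fun2_regular[OF \<psi>]
    by (intro continuous_intros continuous_on_compose2[OF f]) auto
  have slice: "integral {-T..T} (\<lambda>x. A (t, x)) = integral {-T'..T'} (G t)"
    if "t \<in> {-T..T}" for t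
  proof -
    have ct: "\<bar>c * t\<bar> \<le> \<bar>c\<bar> * T" using that by (auto simp: abs_mult intro!: mult_left_mono)
    have "continuous_on UNIV (\<lambda>x. A (t, x))"
      by (rule continuous_on_compose2[OF cA]) (auto intro!: continuous_intros)
    then have "integral {-T'+c*t..T'+c*t} (\<lambda>x. A (t, x)) = integral {-T..T} (\<lambda>x. A (t, x))"
      using ct by (intro integral_Icc_compact_support) (auto simp: A_def supp T'_def)
    then show ?thesis
      using integral_shift_Icc_real[of "-T'" T' "\<lambda>x. A (t, x)" "c * t"]
      by (simp add: G_def o_def add.commute)
  qed
  \<comment> \<open>along the characteristic \<open>x = y + c t\<close> the integrand is a \<open>t\<close>-derivative\<close>
  have along: "integral {-T..T} (\<lambda>t. G t y) = 0" for y
  proof -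
    have "((\<lambda>t. f y * \<psi> (t, y + c * t)) has_real_derivative G t y) (at t)" for t
      using DERIV_cmult[OF has_real_derivative_along_line[of \<psi> 0 1 t y c], of "f y"]
        test_fun2_regular(1)[OF \<psi>]
      by (simp add: G_def A_def ac_simps)
    then have "((\<lambda>t. G t y) has_integral
        f y * \<psi> (T, y + c * T) - f y * \<psi> (-T, y + c * -T)) {-T..T}"
      using T by (intro fundamental_theorem_of_calculus)
        (auto simp: has_real_derivative_iff_has_vector_derivative[symmetric]
          intro: has_field_derivative_at_within)
    then show ?thesis using supp T by (simp add: integral_unique)
  qed
  have cG: "continuous_on (cbox (-T, -T') (T, T')) (\<lambda>(t, y). G t y)"
    unfolding G_def split_def
    by (rule continuous_on_compose2[OF cA]) (auto intro!: continuous_intros)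
  have "integral {-T..T} (\<lambda>t. integral {-T..T} (\<lambda>x. A (t, x)))
      = integral {-T..T} (\<lambda>t. integral {-T'..T'} (G t))"
    using slice by (intro integral_cong) auto
  also have "\<dots> = integral {-T'..T'} (\<lambda>y. integral {-T..T} (\<lambda>t. G t y))"
    using integral_swap_continuous[OF cG] by (simp add: cbox_interval)
  also have "\<dots> = 0"
    using along by simp
  finally have "integral {-T..T} (\<lambda>t. integral {-T..T} (\<lambda>x. A (t, x))) = 0" .
  with has_integral_compact_support_iterated[OF cA, of T] show ?thesis
    unfolding A_def by (simp add: supp)
qed

lemma x_derivative_has_integral_zero:
  fixes H h :: "real \<times> real \<Rightarrow> real"
  assumes cH: "continuous_on UNIV H" and ch: "continuous_on UNIV h"
    and dH: "\<And>t x. ((\<lambda>x. H (t, x)) has_real_derivative h (t, x)) (at x)" and \<psi>: "test_fun2 \<psi>"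
  shows "((\<lambda>p. h p * \<psi> p + H p * partial_x \<psi> p) has_integral 0) UNIV"
proof -
  obtain T where T: "T > 0" and supp: "\<And>t x. T \<le> \<bar>t\<bar> \<or> T \<le> \<bar>x\<bar> \<Longrightarrow>
      \<psi> (t, x) = 0 \<and> partial_t \<psi> (t, x) = 0 \<and> partial_x \<psi> (t, x) = 0"
    using test_fun2_support[OF \<psi>] by blast
  define B where "B = (\<lambda>p. h p * \<psi> p + H p * partial_x \<psi> p)"
  have cB: "continuous_on UNIV B"
    unfolding B_def using test_fun2_regular[OF \<psi>] cH ch by (intro continuous_intros) auto
  have "integral {-T..T} (\<lambda>x. B (t, x)) = 0" for t
  proof -
    have "((\<lambda>x. H (t, x) * \<psi> (t, x)) has_real_derivative B (t, x)) (at x)" for x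
      using DERIV_mult[OF dH has_real_derivative_along_line[of \<psi> t 0 x 0 1]]
        test_fun2_regular(1)[OF \<psi>]
      by (simp add: B_def ac_simps)
    then have "((\<lambda>x. B (t, x)) has_integral
        H (t, T) * \<psi> (t, T) - H (t, -T) * \<psi> (t, -T)) {-T..T}"
      using T by (intro fundamental_theorem_of_calculus)
        (auto simp: has_real_derivative_iff_has_vector_derivative[symmetric]
          intro: has_field_derivative_at_within)
    then show ?thesis using supp T by (simp add: integral_unique)
  qed
  then show ?thesis
    using has_integral_compact_support_iterated[OF cB, of T] supp by (simp add: B_def)
qed

lemma continuous_on_per_ext_moving:
  assumes "\<And>z. (g has_real_derivative g' z) (at z)" "g (-1/2) = g (1/2)"
  shows "continuous_on UNIV (\<lambda>p :: real \<times> real. per_ext g (snd p - c * fst p))"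
proof -
  have "continuous_on UNIV g"
    using assms(1) by (meson DERIV_isCont continuous_at_imp_continuous_on)
  from continuous_on_per_ext[OF this assms(2)] show ?thesis
    by (rule continuous_on_compose2) (auto intro!: continuous_intros)
qed

lemma traveling_wave_weak_form:
  assumes "test_fun2 \<psi>"
  shows "((\<lambda>p. phi c (snd p - c * fst p) * partial_t \<psi> p
      + (phi c (snd p - c * fst p))\<^sup>2 / 2 * partial_x \<psi> p
      - per_ext (nonlocal c) (snd p - c * fst p) * \<psi> p) has_integral 0) UNIV"
proof -
  have "continuous_on UNIV (profile c)" unfolding profile_def by (intro continuous_intros)
  then have "((\<lambda>p. per_ext (profile c) (snd p - c * fst p)
      * (partial_t \<psi> p + c * partial_x \<psi> p)) has_integral 0) UNIV"
    by (intro transport_has_integral_zero[OF _ assms] continuous_on_per_ext profile_ends)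
  moreover have "((\<lambda>p. per_ext (nonlocal c) (snd p - c * fst p) * \<psi> p
      + per_ext (flux c) (snd p - c * fst p) * partial_x \<psi> p) has_integral 0) UNIV"
  proof (rule x_derivative_has_integral_zero[OF _ _ _ assms])
    show "continuous_on UNIV (\<lambda>p. per_ext (flux c) (snd p - c * fst p))"
      by (rule continuous_on_per_ext_moving[OF flux_has_real_derivative flux_ends])
    show "continuous_on UNIV (\<lambda>p. per_ext (nonlocal c) (snd p - c * fst p))"
      by (rule continuous_on_per_ext_moving[OF nonlocal_has_real_derivative nonlocal_ends])
    fix t x
    have "(per_ext (flux c) has_real_derivative per_ext (nonlocal c) (x - c * t)) (at (x - c * t))"
      using per_ext_has_real_derivative[OF flux_has_real_derivative] flux_ends nonlocal_ends
      by blast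
    then show "((\<lambda>x. per_ext (flux c) (snd (t, x) - c * fst (t, x))) has_real_derivative
        per_ext (nonlocal c) (snd (t, x) - c * fst (t, x))) (at x)"
      using DERIV_shift[of "per_ext (flux c)" _ x "- c * t"] by simp
  qed
  ultimately have "((\<lambda>p. per_ext (profile c) (snd p - c * fst p)
      * (partial_t \<psi> p + c * partial_x \<psi> p)
      - (per_ext (nonlocal c) (snd p - c * fst p) * \<psi> p
        + per_ext (flux c) (snd p - c * fst p) * partial_x \<psi> p)) has_integral 0 - 0) UNIV"
    by (rule has_integral_diff)
  then show ?thesis
    by (simp add: phi_eq_per_ext per_ext_def flux_def algebra_simps power2_eq_square)
qed

theorem theorem6p1:
  fixes c :: real and lam :: int
  assumes "lam \<noteq> 0" and "lam \<noteq> 1"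
  shows "weak_solution (real_of_int lam) (\<lambda>t x. phi c (x - c * t))"
  unfolding weak_solution_def
proof (intro conjI allI exI)
  show "continuous_on UNIV (\<lambda>p. phi c (snd p - c * fst p))"
    unfolding phi_eq_per_ext
    by (rule continuous_on_per_ext_moving[OF profile_has_real_derivative profile_ends])
  show "periodic1 (\<lambda>x. phi c (x - c * t))" for t
    unfolding phi_eq_per_ext by (rule periodic1_per_ext_shift)
  show "a \<le> b \<longrightarrow> ((\<lambda>x. per_ext (profile_slope c) (x - c * t)) has_integral
      phi c (b - c * t) - phi c (a - c * t)) {a..b}" for t a b
    unfolding phi_eq_per_ext
    using per_ext_shift_has_integral[OF profile_has_real_derivative profile_ends] by blast
  show "is_Lambda_inv_dx (\<lambda>x. real_of_int lam * mu (\<lambda>x. phi c (x - c * t)) * phi c (x - c * t)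
      + (3 - real_of_int lam) / 2 * (per_ext (profile_slope c) (x - c * t))\<^sup>2)
      (\<lambda>x. per_ext (nonlocal c) (x - c * t))" for t
    by (rule nonlocal_is_Lambda_inv_dx)
  show "test_fun2 \<psi> \<longrightarrow> ((\<lambda>p. phi c (snd p - c * fst p) * frechet_derivative \<psi> (at p) (1, 0)
      + (phi c (snd p - c * fst p))\<^sup>2 / 2 * frechet_derivative \<psi> (at p) (0, 1)
      - per_ext (nonlocal c) (snd p - c * fst p) * \<psi> p) has_integral 0) UNIV" for \<psi>
    using traveling_wave_weak_form[of \<psi> c] by (simp add: partial_t_def partial_x_def)
qed

end
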